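(* Let $F\colon Q^\Delta\to Q^{\Delta'}$ be one of the weighted foldings in the context, and let $\mathcal M_F=\mathrm{mod}\,KQ^\Delta$ and $\mathcal D_F=D^b(\mathcal M_F)$ carry the $\Lambda^+_{2n+1}$-coefficient structures described in the context. Let $\Gamma_{\mathcal M_F}=\{M\in\mathcal M_F: M\text{ indecomposable and }\pi_F(M)\text{ a positive root of }\Delta'\}$ and $\Gamma_{\mathcal D_F}=\{X\in\mathcal D_F: X\text{ indecomposable and }\partial_F(X)\text{ a root of }\Delta'\}$. Then $\Gamma_{\mathcal M_F}$ and $\Gamma_{\mathcal D_F}$ are minimal sets of $\Lambda^+_{2n+1}$-generators of $\mathcal M_F$ and $\mathcal D_F$ respectively, and each is unique up to replacing elements by isomorphic objects.
   Context: $K$ algebraically closed. Foldings $F\colon Q^\Delta\to Q^{\Delta'}$: (I) $n\ge2$, bipartite $Q^{A_{2n}}$ on vertices $0,\dots,2n-1$ (arrows between $i,i+1$; even vertices all sources or all sinks), weights $\kappa(i)=\theta_i:=U_i(\cos\frac{\pi}{2n+1})$ ($U_k$ Chebyshev of second kind), onto $Q^{I_2(2n+1)}$ (vertices $[0],[1]$, one arrow of weight $2\cos\frac{\pi}{2n+1}$), $i\mapsto[i\bmod 2]$. (H) $n=2$, $m\in\{3,4\}$, $Q^\Delta$ of type $D_6/E_8$ with vertices $1..m,\phi_1..\phi_m$, edges $i-(i+1)$, $\phi_i-\phi_{i+1}$ ($i\le m-2$), $(m-1)-\phi_m$, $\phi_{m-1}-m$, $\phi_{m-1}-\phi_m$,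 edges between consecutive columns $\{i,\phi_i\},\{i+1,\phi_{i+1}\}$ oriented alike, weights $\kappa(i)=1$, $\kappa(\phi_i)=\varphi=2\cos(\pi/5)$, onto the path $Q^{H_m}$ ($i,\phi_i\mapsto[i]$; arrow weights 1 except $\varphi$ on $[m-1]-[m]$). $\pi_F(M)=d_F(\underline{\dim}M)$ with $d_F(v)_{[i]}=\sum_{F(j)=[i]}\kappa(j)v_j$; for $X\cong\bigoplus_l\Sigma^lM_l$ in $\mathcal D_F$, $\partial_F(X)=\sum_l(-1)^l\pi_F(M_l)$. Roots of $\Delta'$ are those of the Coxeter group with diagram the underlying graph of $Q^{\Delta'}$, written in coordinates of unit-length simple roots $\alpha_{[i]}$ with $(\alpha_{[i]},\alpha_{[j]})=-\cos(\pi/m_{ij})$ (arrow weight $2\cos(\pi/m_{ij})$). $\Lambda^+_{2n+1}$: commutative semiring generated over $\mathbb Z_{\ge0}$ by $\psi_1..\psi_{n-1}$ with $\psi_k\psi_l=\sum_{j=0}^l\psi_{k-l+2j}$ ($k\ge l$), $\psi_0=1$, $\psi_{2n}=0$, $\psi_k=\psi_{2n-1-k}$; its Grothendieck ring $\Lambda_{2n+1}$ has $\mathbb Z$-basis $\psi_0,\dots,\psi_{n-1}$ and is ordered by $r<s$ iff $\sigma(r)<\sigma(s)$, $\sigma(\psi_k)=\theta_k\in\mathbb R$. The coefficient structure (endofunctors $r$ satisfying additivity, multiplicativity, $1\mapsto\mathrm{id}$, $0\mapsto0$, exactness/triangulatedness and faithfulness on Ext) is on objects as follows: for each positive root $\alpha$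 of $\Delta'$ and $0\le k\le n-1$ there is up to isomorphism a unique indecomposable $M^{(k)}_\alpha$ with $\pi_F(M^{(k)}_\alpha)=\theta_k\alpha$, these exhaust the indecomposables, and $\psi_kM^{(l)}_\alpha\cong\bigoplus_{j=0}^lM^{(k-l+2j)}_\alpha$ for $l\le k$ (indices reduced by $M^{(2n-1-k)}=M^{(k)}$, $M^{(2n)}=0$), extended additively; on $\mathcal D_F$, $r\Sigma^kX=\Sigma^k rX$. Definitions: in an abelian (resp. triangulated) coefficient category, $N$ is $R_+$-generated by $M$ if there are $r,s\in R_+$ and a split exact sequence $0\to sM\to rM\to L\to0$ (resp. split triangle $sM\to rM\to L\to\Sigma sM$ with first morphism a monomorphism) with $N\cong L$; $r-s$ is the $R$-index. For a set $\Gamma$ of objects, $\mathcal M(\Gamma)$ is the full subcategory of finite direct sums of objects $R_+$-generated by elements of $\Gamma$; $\Gamma$ is a set of $R_+$-generators if $\mathcal M(\Gamma)\simeq\mathcal M$. On $\mathcal M(\Gamma)$, $L_1\le L_2$ iff $L_1\cong L_2$ or $L_1,L_2$ are generated by a common $M\in\Gamma$ with $R$-indices $r_1<r_2$. $\Gamma$ is basic if its elements are pairwise non-isomorphic indecomposables, and a basic $\Gamma$ is minimal if for every basic set of generators $\Gamma'$ there is an injective map $\theta\colon\Gamma\to\Gamma'$ with $M\le\theta(M)$ in $\mathcal M(\Gamma\cup\Gamma')$ for all $M\in\Gamma$. *)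

theory Defs
  imports Complex_Main "HOL-Library.Multiset"
begin

text \<open>FoldI n : folding (I) of A_{2n} onto I_2(2n+1) (requires n >= 2).
      FoldH m : folding (H) of D_6 / E_8 onto H_m (requires m in {3,4}); here n = 2.\<close>
datatype folding = FoldI nat | FoldH nat

definition valid_folding :: "folding \<Rightarrow> bool" where
  "valid_folding F = (case F of FoldI n \<Rightarrow> 2 \<le> n | FoldH m \<Rightarrow> m \<in> {3, 4})"

text \<open>the parameter n of the coefficient semiring Lambda^+_{2n+1}\<close>
fun npar :: "folding \<Rightarrow> nat" where
  "npar (FoldI n) = n"
| "npar (FoldH m) = 2"

text \<open>rank of Delta' (vertices of Q^{Delta'} are 0..rk-1; for H_m vertex [i] is i-1)\<close>
fun rk :: "folding \<Rightarrow> nat" where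
  "rk (FoldI n) = 2"
| "rk (FoldH m) = m"

text \<open>Coxeter labels m_ij of the diagram of Q^{Delta'} (m_ii = 1, non-adjacent = 2)\<close>
fun coxm :: "folding \<Rightarrow> nat \<Rightarrow> nat \<Rightarrow> nat" where
  "coxm (FoldI n) i j = (if i = j then 1 else 2 * n + 1)"
| "coxm (FoldH m) i j = (if i = j then 1
      else if i + 1 = j \<or> j + 1 = i then (if max i j = m - 1 then 5 else 3) else 2)"

definition gram :: "folding \<Rightarrow> nat \<Rightarrow> nat \<Rightarrow> real" where
  "gram F i j = - cos (pi / real (coxm F i j))"

definition bform :: "folding \<Rightarrow> (nat \<Rightarrow> real) \<Rightarrow> (nat \<Rightarrow> real) \<Rightarrow> real" where
  "bform F v w = (\<Sum>i<rk F. \<Sum>j<rk F. v i * gram F i j * w j)"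

definition sroot :: "nat \<Rightarrow> (nat \<Rightarrow> real)" where
  "sroot i = (\<lambda>j. if j = i then 1 else 0)"

definition refl :: "folding \<Rightarrow> nat \<Rightarrow> (nat \<Rightarrow> real) \<Rightarrow> (nat \<Rightarrow> real)" where
  "refl F i v = (\<lambda>j. v j - 2 * bform F v (sroot i) * sroot i j)"

text \<open>roots of Delta': the orbit of the (unit-length) simple roots under the Coxeter group\<close>
inductive_set roots :: "folding \<Rightarrow> (nat \<Rightarrow> real) set" for F where
  simple: "i < rk F \<Longrightarrow> sroot i \<in> roots F"
| reflect: "v \<in> roots F \<Longrightarrow> i < rk F \<Longrightarrow> refl F i v \<in> roots F"

definition pos_roots :: "folding \<Rightarrow> (nat \<Rightarrow> real) set" where
  "pos_roots F = {v \<in> roots F. \<forall>i. 0 \<le> v i}"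

fun chebU :: "nat \<Rightarrow> real \<Rightarrow> real" where
  "chebU 0 x = 1"
| "chebU (Suc 0) x = 2 * x"
| "chebU (Suc (Suc k)) x = 2 * x * chebU (Suc k) x - chebU k x"

definition theta :: "folding \<Rightarrow> nat \<Rightarrow> real" where
  "theta F k = chebU k (cos (pi / real (2 * npar F + 1)))"

text \<open>Elements of Lambda^+_{2n+1}: N-combinations of psi_0..psi_{n-1}, as multisets of indices.\<close>
definition Rplus :: "folding \<Rightarrow> nat multiset set" where
  "Rplus F = {r. set_mset r \<subseteq> {..<npar F}}"

definition sigma :: "folding \<Rightarrow> nat multiset \<Rightarrow> real" where
  "sigma F r = (\<Sum>k\<in>#r. theta F k)"

text \<open>index reduction M^(2n-1-k) = M^(k)\<close>
definition red :: "folding \<Rightarrow> nat \<Rightarrow> nat" where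
  "red F i = (if i < npar F then i else 2 * npar F - 1 - i)"

text \<open>psi_k M^(l) = sum_{j=0}^{min k l} M^(|k-l|+2j)\<close>
definition fusion :: "folding \<Rightarrow> nat \<Rightarrow> nat \<Rightarrow> nat multiset" where
  "fusion F k l = image_mset (\<lambda>j. red F (max k l - min k l + 2 * j)) (mset [0..<Suc (min k l)])"

section \<open>Object-level models of M_F and D_F (Krull-Schmidt: objects up to iso = multisets
  of indecomposables). M^(k)_alpha is the label (alpha,k); Sigma^l M^(k)_alpha is (alpha,k,l).\<close>

type_synonym mlabel = "(nat \<Rightarrow> real) \<times> nat"
type_synonym dlabel = "(nat \<Rightarrow> real) \<times> nat \<times> int"

definition ObjM :: "folding \<Rightarrow> mlabel multiset set" where
  "ObjM F = {X. \<forall>p\<in>#X. fst p \<in> pos_roots F \<and> snd p < npar F}"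

definition ObjD :: "folding \<Rightarrow> dlabel multiset set" where
  "ObjD F = {X. \<forall>p\<in>#X. fst p \<in> pos_roots F \<and> fst (snd p) < npar F}"

definition actM :: "folding \<Rightarrow> nat multiset \<Rightarrow> mlabel multiset \<Rightarrow> mlabel multiset" where
  "actM F r X = (\<Sum>k\<in>#r. \<Sum>p\<in>#X. image_mset (\<lambda>k'. (fst p, k')) (fusion F k (snd p)))"

definition actD :: "folding \<Rightarrow> nat multiset \<Rightarrow> dlabel multiset \<Rightarrow> dlabel multiset" where
  "actD F r X = (\<Sum>k\<in>#r. \<Sum>p\<in>#X.
      image_mset (\<lambda>k'. (fst p, k', snd (snd p))) (fusion F k (fst (snd p))))"

definition piF :: "folding \<Rightarrow> mlabel multiset \<Rightarrow> (nat \<Rightarrow> real)" where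
  "piF F X = (\<lambda>i. \<Sum>p\<in>#X. theta F (snd p) * fst p i)"

definition partialF :: "folding \<Rightarrow> dlabel multiset \<Rightarrow> (nat \<Rightarrow> real)" where
  "partialF F X = (\<lambda>i. \<Sum>p\<in>#X. (if even (snd (snd p)) then 1 else -1)
                              * theta F (fst (snd p)) * fst p i)"

definition indec :: "'b multiset \<Rightarrow> bool" where
  "indec X = (size X = 1)"

text \<open>L is R_+-generated by M with witnesses r,s (split sequence: rM = sM (+) L); index r - s\<close>
definition gen_idx :: "(nat multiset \<Rightarrow> 'b multiset \<Rightarrow> 'b multiset) \<Rightarrow> nat multiset set
    \<Rightarrow> 'b multiset \<Rightarrow> 'b multiset \<Rightarrow> nat multiset \<Rightarrow> nat multiset \<Rightarrow> bool" where
  "gen_idx act R L M r s = (r \<in> R \<and> s \<in> R \<and> act r M = act s M + L)"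

definition gen_by :: "(nat multiset \<Rightarrow> 'b multiset \<Rightarrow> 'b multiset) \<Rightarrow> nat multiset set
    \<Rightarrow> 'b multiset \<Rightarrow> 'b multiset \<Rightarrow> bool" where
  "gen_by act R L M = (\<exists>r s. gen_idx act R L M r s)"

definition Mspan :: "(nat multiset \<Rightarrow> 'b multiset \<Rightarrow> 'b multiset) \<Rightarrow> nat multiset set
    \<Rightarrow> 'b multiset set \<Rightarrow> 'b multiset set" where
  "Mspan act R \<Gamma> = {sum_list xs | xs. \<forall>x\<in>set xs. \<exists>M\<in>\<Gamma>. gen_by act R x M}"

definition generators :: "(nat multiset \<Rightarrow> 'b multiset \<Rightarrow> 'b multiset) \<Rightarrow> nat multiset set
    \<Rightarrow> 'b multiset set \<Rightarrow> 'b multiset set \<Rightarrow> bool" where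
  "generators act R Obj \<Gamma> = (\<Gamma> \<subseteq> Obj \<and> Mspan act R \<Gamma> = Obj)"

definition basic :: "'b multiset set \<Rightarrow> bool" where
  "basic \<Gamma> = (\<forall>X\<in>\<Gamma>. indec X)"

definition leqG :: "(nat multiset \<Rightarrow> 'b multiset \<Rightarrow> 'b multiset) \<Rightarrow> nat multiset set
    \<Rightarrow> (nat multiset \<Rightarrow> real) \<Rightarrow> 'b multiset set \<Rightarrow> 'b multiset \<Rightarrow> 'b multiset \<Rightarrow> bool" where
  "leqG act R sig \<Gamma> L1 L2 = (L1 = L2 \<or>
     (\<exists>M\<in>\<Gamma>. \<exists>r1 s1 r2 s2. gen_idx act R L1 M r1 s1 \<and> gen_idx act R L2 M r2 s2
        \<and> sig r1 - sig s1 < sig r2 - sig s2))"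

definition minimal :: "(nat multiset \<Rightarrow> 'b multiset \<Rightarrow> 'b multiset) \<Rightarrow> nat multiset set
    \<Rightarrow> (nat multiset \<Rightarrow> real) \<Rightarrow> 'b multiset set \<Rightarrow> 'b multiset set \<Rightarrow> bool" where
  "minimal act R sig Obj \<Gamma> = (basic \<Gamma> \<and>
     (\<forall>\<Gamma>'. basic \<Gamma>' \<and> generators act R Obj \<Gamma>' \<longrightarrow>
        (\<exists>\<theta>. inj_on \<theta> \<Gamma> \<and> \<theta> ` \<Gamma> \<subseteq> \<Gamma>' \<and> (\<forall>M\<in>\<Gamma>. leqG act R sig (\<Gamma> \<union> \<Gamma>') M (\<theta> M)))))"

definition min_gens :: "(nat multiset \<Rightarrow> 'b multiset \<Rightarrow> 'b multiset) \<Rightarrow> nat multiset set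
    \<Rightarrow> (nat multiset \<Rightarrow> real) \<Rightarrow> 'b multiset set \<Rightarrow> 'b multiset set \<Rightarrow> bool" where
  "min_gens act R sig Obj \<Gamma> = (generators act R Obj \<Gamma> \<and> minimal act R sig Obj \<Gamma>)"

definition GammaM :: "folding \<Rightarrow> mlabel multiset set" where
  "GammaM F = {X \<in> ObjM F. indec X \<and> piF F X \<in> pos_roots F}"

definition GammaD :: "folding \<Rightarrow> dlabel multiset set" where
  "GammaD F = {X \<in> ObjD F. indec X \<and> partialF F X \<in> roots F}"

end

theory Submission
  imports Defs
begin

(* Every object is a multiset of indecomposables M^(k)_alpha, and psi_k M^(0)_alpha = M^(k)_alpha,
   so the M^(0)_alpha (in D_F together with their shifts) generate. They are exactly the members
   of Gamma: pi_F M^(k)_alpha = theta_k alpha is a root only for k = 0, since roots have unit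
   length and theta_k > 1 for 0 < k < n.

   Minimality and uniqueness are read off the weight of an object, the sum of theta_k over its
   indecomposable summands. By the Chebyshev product formula
   theta_k theta_l = sum_j theta_(k-l+2j) the action of r multiplies weights by sigma(r), so the
   R-index of L over a generator M^(k)_alpha is weight(L) / theta_k. Hence M^(0)_alpha lies
   strictly below every other indecomposable with the same alpha and nothing lies strictly below
   it, while every basic generating set contains, for each alpha, some M^(k)_alpha. *)

lemma chebU_cos_mult_sin: "chebU k (cos a) * sin a = sin (real (Suc k) * a)"
proof (induction k "cos a" rule: chebU.induct)
  case 1
  show ?case by simp
next
  case 2
  show ?case by (simp add: sin_double)
next
  case (3 k)
  have "chebU (Suc (Suc k)) (cos a) * sin a
      = 2 * cos a * sin (real (Suc (Suc k)) * a) - sin (real (Suc k) * a)"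
    using 3 by (simp add: algebra_simps)
  also have "\<dots> = sin (real (Suc (Suc (Suc k))) * a)"
    using sin_add[of "real (Suc (Suc k)) * a" a] sin_diff[of "real (Suc (Suc k)) * a" a]
    by (simp add: algebra_simps)
  finally show ?case .
qed

lemma sin_pi_div_pos: "1 < N \<Longrightarrow> 0 < sin (pi / real N)"
  by (rule sin_gt_zero) (simp_all add: field_simps)

lemma chebU_cos_mult:
  assumes "sin a \<noteq> 0" "k \<le> l"
  shows "chebU k (cos a) * chebU l (cos a) = (\<Sum>j\<le>k. chebU (l - k + 2 * j) (cos a))"
proof -
  define g where "g j = cos (real (l - k + 2 * j) * a)" for j
  have telescoping_term: "chebU (l - k + 2 * j) (cos a) * sin a * sin a = (g j - g (Suc j)) / 2" for j
    using chebU_cos_mult_sin[of "l - k + 2 * j" a]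
      sin_times_sin[of "real (Suc (l - k + 2 * j)) * a" a]
    by (simp add: g_def algebra_simps)
  have "(\<Sum>j\<le>k. chebU (l - k + 2 * j) (cos a)) * sin a * sin a = (g 0 - g (Suc k)) / 2"
    unfolding sum_distrib_right telescoping_term
    by (simp add: sum_divide_distrib[symmetric] lessThan_Suc_atMost[symmetric]
        sum_lessThan_telescope')
  also have "\<dots> = sin (real (Suc l) * a) * sin (real (Suc k) * a)"
  proof -
    have "real (Suc l) * a - real (Suc k) * a = real (l - k + 2 * 0) * a"
      and "real (Suc l) * a + real (Suc k) * a = real (l - k + 2 * Suc k) * a"
      using assms(2) by (simp_all add: algebra_simps)
    then show ?thesis
      unfolding sin_times_sin g_def by simp
  qed
  also have "\<dots> = chebU k (cos a) * chebU l (cos a) * sin a * sin a"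
    unfolding chebU_cos_mult_sin[symmetric] by (simp add: algebra_simps)
  finally show ?thesis
    using assms(1) by simp
qed

lemma chebU_cos_pi_div_gt_1:
  assumes "0 < k" "k + 2 < N"
  shows "1 < chebU k (cos (pi / real N))"
proof -
  define a where "a = pi / real N"
  have "0 < a"
    using assms by (simp add: a_def)
  have "real (k + 2) * a < real N * a"
    using assms \<open>0 < a\<close> by (intro mult_strict_right_mono) simp_all
  then have "real k * a + 2 * a < pi"
    using assms by (simp add: a_def algebra_simps)
  moreover have "0 < real k * a"
    using assms(1) \<open>0 < a\<close> by simp
  ultimately have "0 < sin (real k * a / 2)" "0 < cos (real (k + 2) * a / 2)"
    using \<open>0 < a\<close> by (auto intro!: sin_gt_zero cos_gt_zero_pi simp: algebra_simps)
  then have "sin a < sin (real (Suc k) * a)"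
    using sin_diff_sin[of "real (Suc k) * a" a] by (simp add: algebra_simps)
  then have "sin a * 1 < sin a * chebU k (cos a)"
    using chebU_cos_mult_sin[of k a] by (simp add: mult.commute)
  moreover have "0 < sin a"
    using assms sin_pi_div_pos[of N] by (simp add: a_def)
  ultimately show ?thesis
    unfolding a_def[symmetric] by simp
qed

lemma chebU_cos_pi_div_reflect:
  assumes "k + 2 \<le> N"
  shows "chebU (N - 2 - k) (cos (pi / real N)) = chebU k (cos (pi / real N))"
proof -
  define a where "a = pi / real N"
  have "real (Suc (N - 2 - k)) * a = pi - real (Suc k) * a"
    using assms by (simp add: a_def field_simps)
  then have "chebU (N - 2 - k) (cos a) * sin a = chebU k (cos a) * sin a"
    by (simp add: chebU_cos_mult_sin)
  moreover have "0 < sin a"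
    using assms sin_pi_div_pos[of N] by (simp add: a_def)
  ultimately show ?thesis
    by (simp add: a_def)
qed

lemma theta_0 [simp]: "theta F 0 = 1"
  by (simp add: theta_def)

lemma theta_gt_1: "0 < k \<Longrightarrow> k < npar F \<Longrightarrow> 1 < theta F k"
  unfolding theta_def by (rule chebU_cos_pi_div_gt_1) auto

lemma theta_red: "i < 2 * npar F \<Longrightarrow> theta F (red F i) = theta F i"
  using chebU_cos_pi_div_reflect[of i "2 * npar F + 1"]
  by (simp add: red_def theta_def)

lemma fusion_0: "k < npar F \<Longrightarrow> fusion F k 0 = {#k#}"
  by (simp add: fusion_def red_def)

lemma sum_theta_fusion:
  assumes "k < npar F" "l < npar F"
  shows "(\<Sum>k'\<in>#fusion F k l. theta F k') = theta F k * theta F l"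
proof -
  let ?k = "min k l" and ?l = "max k l"
  have "(\<Sum>k'\<in>#fusion F k l. theta F k') = (\<Sum>j\<le>?k. theta F (red F (?l - ?k + 2 * j)))"
    unfolding fusion_def
    by (simp only: mset_map[symmetric] sum_mset_sum_list map_map o_def
        interv_sum_list_conv_sum_set_nat set_upt atLeast0LessThan lessThan_Suc_atMost)
  also have "\<dots> = (\<Sum>j\<le>?k. theta F (?l - ?k + 2 * j))"
    using assms by (intro sum.cong refl theta_red) auto
  also have "\<dots> = theta F ?k * theta F ?l"
    unfolding theta_def
    using assms sin_pi_div_pos[of "2 * npar F + 1"] by (intro chebU_cos_mult[symmetric]) auto
  finally show ?thesis
    by (simp add: min_def max_def)
qed

lemma gram_sym: "gram F i j = gram F j i"
  unfolding gram_def by (cases F) (auto simp: max.commute)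

lemma gram_diag [simp]: "gram F i i = 1"
  unfolding gram_def by (cases F) auto

lemma bform_sym: "bform F v w = bform F w v"
  unfolding bform_def by (subst sum.swap) (simp add: gram_sym algebra_simps)

lemma bform_add_scaled_left:
  "bform F (\<lambda>j. v j + c * w j) u = bform F v u + c * bform F w u"
  unfolding bform_def by (simp add: algebra_simps sum.distrib sum_distrib_left)

lemma bform_add_scaled_right:
  "bform F u (\<lambda>j. v j + c * w j) = bform F u v + c * bform F u w"
  using bform_add_scaled_left[of F v c w u] by (simp add: bform_sym)

lemma bform_scaled: "bform F (\<lambda>j. c * v j) (\<lambda>j. c * w j) = c\<^sup>2 * bform F v w"
  unfolding bform_def by (simp add: algebra_simps sum_distrib_left power2_eq_square)

lemma bform_uminus_left: "bform F (- v) w = - bform F v w"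
  unfolding bform_def by (simp add: sum_negf)

lemma bform_sroot_sroot: "i < rk F \<Longrightarrow> bform F (sroot i) (sroot i) = 1"
  by (simp add: bform_def sroot_def of_bool_def[symmetric] Int_insert_left if_distrib cong: if_cong)

lemma bform_refl_refl: "i < rk F \<Longrightarrow> bform F (refl F i v) (refl F i v) = bform F v v"
proof -
  assume i: "i < rk F"
  have refl_eq: "refl F i v = (\<lambda>j. v j + (- 2 * bform F v (sroot i)) * sroot i j)"
    by (simp add: refl_def)
  show ?thesis
    unfolding refl_eq bform_add_scaled_left bform_add_scaled_right
    by (simp add: bform_sroot_sroot[OF i] bform_sym[of F "sroot i" v] algebra_simps)
qed

lemma roots_bform_self: "v \<in> roots F \<Longrightarrow> bform F v v = 1"
  by (induction rule: roots.induct) (simp_all add: bform_sroot_sroot bform_refl_refl)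

lemma refl_uminus: "refl F i (- v) = - refl F i v"
  by (auto simp: refl_def bform_uminus_left)

lemma refl_sroot_self: "refl F i (sroot i) = - sroot i" if "i < rk F"
  unfolding refl_def bform_sroot_sroot[OF that] by (auto simp: sroot_def)

lemma roots_uminus: "v \<in> roots F \<Longrightarrow> - v \<in> roots F"
proof (induction rule: roots.induct)
  case (simple i)
  then show ?case
    using roots.reflect[OF roots.simple] by (metis refl_sroot_self)
next
  case (reflect v i)
  then show ?case
    using roots.reflect by (metis refl_uminus)
qed

lemma roots_scaled_imp_abs_1:
  assumes "v \<in> roots F" "(\<lambda>j. c * v j) \<in> roots F"
  shows "\<bar>c\<bar> = 1"
proof -
  have "c\<^sup>2 = 1"
    using roots_bform_self[OF assms(1)] roots_bform_self[OF assms(2)] bform_scaled[of F c v v]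
    by simp
  then show ?thesis
    by (simp add: abs_square_eq_1)
qed

lemma indec_iff_singleton: "indec X \<longleftrightarrow> (\<exists>p. X = {#p#})"
  unfolding indec_def by (metis One_nat_def size_1_singleton_mset size_single)

lemma basic_singleton:
  assumes "basic \<Gamma>" "X \<in> \<Gamma>"
  obtains p where "X = {#p#}"
  using assms by (auto simp: basic_def indec_iff_singleton)

lemma singleton_in_Mspan:
  assumes "{#p#} \<in> Mspan act R \<Gamma>" "basic \<Gamma>"
  obtains q where "{#q#} \<in> \<Gamma>" "gen_by act R {#p#} {#q#}"
proof -
  obtain xs where xs: "{#p#} = sum_list xs" "\<forall>x\<in>set xs. \<exists>M\<in>\<Gamma>. gen_by act R x M"
    using assms(1) by (auto simp: Mspan_def)
  then obtain x where x: "x \<in> set xs" "p \<in># x"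
    by (metis set_mset_sum_list UN_E insert_iff set_mset_single)
  have "x \<subseteq># sum_list xs"
    using x(1) by (induction xs) (auto intro: subset_mset.add_increasing subset_mset.add_increasing2)
  then have "x \<subseteq># {#p#}"
    using xs(1) by simp
  then have "x = {#p#}"
    using x(2) by (simp add: subset_mset.antisym mset_subset_eq_single)
  then show ?thesis
    using that xs(2) x(1) assms(2) basic_singleton by metis
qed

text \<open>Indecomposables p are labelled by a key (the root alpha, and in D_F also the shift) and
  an index, p = mk (key p) (idx p) standing for M^(idx p); fu k l lists the indices of
  psi_k M^(l).\<close>

locale fusion_action =
  fixes n :: nat
    and th :: "nat \<Rightarrow> real"
    and fu :: "nat \<Rightarrow> nat \<Rightarrow> nat multiset"
    and mk :: "'k \<Rightarrow> nat \<Rightarrow> 'b" and key :: "'b \<Rightarrow> 'k" and idx :: "'b \<Rightarrow> nat"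
    and K :: "'k set"
    and act :: "nat multiset \<Rightarrow> 'b multiset \<Rightarrow> 'b multiset"
    and Obj :: "'b multiset set"
    and R :: "nat multiset set"
    and sig :: "nat multiset \<Rightarrow> real"
    and Gam :: "'b multiset set"
  assumes n_pos: "0 < n"
    and th_0: "th 0 = 1"
    and th_gt_1: "\<And>k. 0 < k \<Longrightarrow> k < n \<Longrightarrow> 1 < th k"
    and fu_0: "\<And>k. k < n \<Longrightarrow> fu k 0 = {#k#}"
    and sum_th_fu: "\<And>k l. k < n \<Longrightarrow> l < n \<Longrightarrow> (\<Sum>k'\<in>#fu k l. th k') = th k * th l"
    and key_mk [simp]: "\<And>a k. key (mk a k) = a"
    and idx_mk [simp]: "\<And>a k. idx (mk a k) = k"
    and mk_key_idx [simp]: "\<And>p. mk (key p) (idx p) = p"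
    and act_eq: "\<And>r X. act r X = (\<Sum>k\<in>#r. \<Sum>p\<in>#X. image_mset (mk (key p)) (fu k (idx p)))"
    and Obj_eq: "Obj = {X. \<forall>p\<in>#X. key p \<in> K \<and> idx p < n}"
    and R_eq: "R = {r. set_mset r \<subseteq> {..<n}}"
    and sig_eq: "sig = (\<lambda>r. \<Sum>k\<in>#r. th k)"
    and Gam_eq: "Gam = {{#mk a 0#} | a. a \<in> K}"
begin

lemma th_ge_1: "k < n \<Longrightarrow> 1 \<le> th k"
  using th_gt_1[of k] th_0 by (cases "k = 0") auto

lemma act_singleton: "act r {#p#} = (\<Sum>k\<in>#r. image_mset (mk (key p)) (fu k (idx p)))"
  by (simp add: act_eq)

lemma act_base: "r \<in> R \<Longrightarrow> act r {#mk a 0#} = image_mset (mk a) r"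
  unfolding R_eq mem_Collect_eq act_singleton
  by (induction r) (auto simp: fu_0 n_pos)

lemma key_act: "p \<in># act r {#q#} \<Longrightarrow> key p = key q"
  by (auto simp: act_singleton)

definition weight :: "'b multiset \<Rightarrow> real" where
  "weight X = (\<Sum>p\<in>#X. th (idx p))"

lemma weight_act:
  assumes "r \<in> R" "idx q < n"
  shows "weight (act r {#q#}) = sig r * th (idx q)"
  using assms(1) unfolding R_eq mem_Collect_eq
proof (induction r)
  case empty
  then show ?case
    by (simp add: weight_def act_eq sig_eq)
next
  case (add k r)
  have "weight (image_mset (mk (key q)) (fu k (idx q))) = th k * th (idx q)"
    using add.prems assms(2) by (simp add: weight_def image_mset.compositionality comp_def sum_th_fu)
  with add show ?case
    by (simp add: act_singleton weight_def sig_eq algebra_simps)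
qed

lemma weight_gen_idx:
  assumes "gen_idx act R L {#q#} r s" "idx q < n"
  shows "weight L = (sig r - sig s) * th (idx q)"
proof -
  have r: "r \<in> R" and s: "s \<in> R" and split: "act r {#q#} = act s {#q#} + L"
    using assms(1) by (auto simp: gen_idx_def)
  have "weight (act r {#q#}) = weight (act s {#q#}) + weight L"
    unfolding split by (simp add: weight_def)
  then show ?thesis
    using weight_act[OF r assms(2)] weight_act[OF s assms(2)] by (simp add: algebra_simps)
qed

lemma gen_idx_base: "idx p < n \<Longrightarrow> gen_idx act R {#p#} {#mk (key p) 0#} {#idx p#} {#}"
  by (simp add: gen_idx_def act_base R_eq)

lemma Gam_subset_Obj: "Gam \<subseteq> Obj"
  by (auto simp: Gam_eq Obj_eq n_pos)

lemma gen_by_base_in_Obj: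
  assumes "gen_by act R X {#mk a 0#}" "a \<in> K"
  shows "X \<in> Obj"
  unfolding Obj_eq
proof (intro CollectI ballI)
  fix p assume "p \<in># X"
  obtain r s where "r \<in> R" "act r {#mk a 0#} = act s {#mk a 0#} + X"
    using assms(1) by (auto simp: gen_by_def gen_idx_def)
  then have "p \<in># image_mset (mk a) r" and "set_mset r \<subseteq> {..<n}"
    using \<open>p \<in># X\<close> by (auto simp: R_eq simp flip: act_base)
  then show "key p \<in> K \<and> idx p < n"
    using assms(2) by auto
qed

lemma Mspan_Gam: "Mspan act R Gam = Obj"
proof
  show "Mspan act R Gam \<subseteq> Obj"
  proof
    fix X assume "X \<in> Mspan act R Gam"
    then obtain xs where X: "X = sum_list xs" and xs: "\<forall>x\<in>set xs. \<exists>M\<in>Gam. gen_by act R x M"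
      by (auto simp: Mspan_def)
    have "set xs \<subseteq> Obj"
      using xs gen_by_base_in_Obj unfolding Gam_eq by blast
    then show "X \<in> Obj"
      unfolding X Obj_eq by fastforce
  qed
next
  show "Obj \<subseteq> Mspan act R Gam"
  proof
    fix X assume X: "X \<in> Obj"
    obtain xs where xs: "mset xs = X"
      using ex_mset by blast
    have "gen_by act R {#p#} {#mk (key p) 0#} \<and> {#mk (key p) 0#} \<in> Gam" if "p \<in> set xs" for p
    proof -
      have "key p \<in> K" "idx p < n"
        using that X xs by (auto simp: Obj_eq)
      then show ?thesis
        using gen_idx_base[of p] unfolding gen_by_def Gam_eq by blast
    qed
    then have "\<forall>x\<in>set (map (\<lambda>p. {#p#}) xs). \<exists>M\<in>Gam. gen_by act R x M"
      by auto
    moreover have "X = sum_list (map (\<lambda>p. {#p#}) xs)"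
      using xs by simp
    ultimately show "X \<in> Mspan act R Gam"
      unfolding Mspan_def by blast
  qed
qed

lemma generators_Gam: "generators act R Obj Gam"
  using Mspan_Gam Gam_subset_Obj by (simp add: generators_def)

lemma generator_with_key:
  assumes "generators act R Obj \<Gamma>" "basic \<Gamma>" "a \<in> K"
  obtains q where "{#q#} \<in> \<Gamma>" "key q = a"
proof -
  have "{#mk a 0#} \<in> Mspan act R \<Gamma>"
    using assms(1,3) Gam_subset_Obj by (auto simp: generators_def Gam_eq)
  then obtain q where q: "{#q#} \<in> \<Gamma>" "gen_by act R {#mk a 0#} {#q#}"
    using assms(2) by (rule singleton_in_Mspan)
  from q(2) obtain r s where "act r {#q#} = act s {#q#} + {#mk a 0#}"
    by (auto simp: gen_by_def gen_idx_def)
  then have "key q = a"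
    using key_act[of "mk a 0" r q] by simp
  with q(1) show ?thesis
    by (rule that)
qed

lemma leqG_base:
  assumes "{#mk (key q) 0#} \<in> \<Gamma>" "idx q < n"
  shows "leqG act R sig \<Gamma> {#mk (key q) 0#} {#q#}"
proof (cases "idx q = 0")
  case True
  then show ?thesis
    by (metis leqG_def mk_key_idx)
next
  case False
  then have "sig {#0#} - sig {#} < sig {#idx q#} - sig {#}"
    using th_gt_1 assms(2) by (simp add: sig_eq th_0)
  moreover have "gen_idx act R {#mk (key q) 0#} {#mk (key q) 0#} {#0#} {#}"
    using gen_idx_base[of "mk (key q) 0"] n_pos by simp
  ultimately show ?thesis
    using assms gen_idx_base[of q] unfolding leqG_def by blast
qed

lemma leqG_base_imp_eq:
  assumes "leqG act R sig \<Gamma> {#p#} {#mk a 0#}" "basic \<Gamma>" "\<Gamma> \<subseteq> Obj" "idx p < n"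
  shows "p = mk a 0"
proof (rule ccontr)
  assume "p \<noteq> mk a 0"
  then obtain C r1 s1 r2 s2 where C: "C \<in> \<Gamma>" and
    idx1: "gen_idx act R {#p#} C r1 s1" and idx2: "gen_idx act R {#mk a 0#} C r2 s2" and
    less: "sig r1 - sig s1 < sig r2 - sig s2"
    using assms(1) by (auto simp: leqG_def)
  \<comment> \<open>over a common generator {#g#} the two indices are th (idx p) / th (idx g) and 1 / th (idx g)\<close>
  obtain g where g: "C = {#g#}"
    using assms(2) C by (rule basic_singleton)
  have "idx g < n"
    using assms(3) C g by (auto simp: Obj_eq)
  have "th (idx p) = (sig r1 - sig s1) * th (idx g)"
    using weight_gen_idx[OF idx1[unfolded g] \<open>idx g < n\<close>] by (simp add: weight_def)
  also have "\<dots> < (sig r2 - sig s2) * th (idx g)"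
    using less th_ge_1[OF \<open>idx g < n\<close>] by simp
  also have "\<dots> = 1"
    using weight_gen_idx[OF idx2[unfolded g] \<open>idx g < n\<close>] by (simp add: weight_def th_0)
  finally show False
    using th_ge_1[OF assms(4)] by simp
qed

lemma basic_Gam: "basic Gam"
  by (auto simp: basic_def indec_def Gam_eq)

lemma minimal_Gam: "minimal act R sig Obj Gam"
  unfolding minimal_def
proof (intro conjI allI impI basic_Gam)
  fix \<Gamma> assume \<Gamma>: "basic \<Gamma> \<and> generators act R Obj \<Gamma>"
  have "\<forall>a\<in>K. \<exists>q. {#q#} \<in> \<Gamma> \<and> key q = a"
    using \<Gamma> generator_with_key by metis
  then obtain f where f: "\<And>a. a \<in> K \<Longrightarrow> {#f a#} \<in> \<Gamma> \<and> key (f a) = a"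
    by metis
  have f_idx: "idx (f a) < n" if "a \<in> K" for a
    using f[OF that] \<Gamma> by (auto simp: generators_def Obj_eq)
  define \<theta> where "\<theta> = image_mset (f \<circ> key)"
  have \<theta>_base: "\<theta> {#mk a 0#} = {#f a#}" for a
    by (simp add: \<theta>_def)
  show "\<exists>\<theta>. inj_on \<theta> Gam \<and> \<theta> ` Gam \<subseteq> \<Gamma> \<and> (\<forall>M\<in>Gam. leqG act R sig (Gam \<union> \<Gamma>) M (\<theta> M))"
  proof (intro exI[of _ \<theta>] conjI ballI)
    show "inj_on \<theta> Gam"
    proof (rule inj_onI)
      fix M M' assume "M \<in> Gam" "M' \<in> Gam" "\<theta> M = \<theta> M'"
      then obtain a b where "a \<in> K" "b \<in> K" "f a = f b" "M = {#mk a 0#}" "M' = {#mk b 0#}"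
        by (auto simp: Gam_eq \<theta>_base)
      then show "M = M'"
        using f by metis
    qed
    show "\<theta> ` Gam \<subseteq> \<Gamma>"
      using f by (auto simp: Gam_eq \<theta>_base)
  next
    fix M assume "M \<in> Gam"
    then obtain a where a: "a \<in> K" "M = {#mk a 0#}"
      by (auto simp: Gam_eq)
    then show "leqG act R sig (Gam \<union> \<Gamma>) M (\<theta> M)"
      using leqG_base[of "f a" "Gam \<union> \<Gamma>"] f[OF a(1)] f_idx[OF a(1)] \<open>M \<in> Gam\<close>
      by (simp add: \<theta>_base)
  qed
qed

lemma min_gens_Gam: "min_gens act R sig Obj Gam"
  using generators_Gam minimal_Gam by (simp add: min_gens_def)

lemma min_gens_eq_Gam:
  assumes "min_gens act R sig Obj \<Gamma>"
  shows "\<Gamma> = Gam"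
proof -
  have gens: "generators act R Obj \<Gamma>" and "basic \<Gamma>" "minimal act R sig Obj \<Gamma>"
    using assms by (auto simp: min_gens_def minimal_def)
  then obtain \<theta> where \<theta>: "\<theta> ` \<Gamma> \<subseteq> Gam" "\<forall>M\<in>\<Gamma>. leqG act R sig (\<Gamma> \<union> Gam) M (\<theta> M)"
    using basic_Gam generators_Gam unfolding minimal_def by blast
  have "basic (\<Gamma> \<union> Gam)" "\<Gamma> \<union> Gam \<subseteq> Obj"
    using \<open>basic \<Gamma>\<close> basic_Gam gens Gam_subset_Obj by (auto simp: basic_def generators_def)
  have "\<Gamma> \<subseteq> Gam"
  proof
    fix M assume M: "M \<in> \<Gamma>"
    obtain p where p: "M = {#p#}"
      using \<open>basic \<Gamma>\<close> M by (rule basic_singleton)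
    obtain a where a: "a \<in> K" "\<theta> M = {#mk a 0#}"
      using \<theta>(1) M by (auto simp: Gam_eq)
    have "idx p < n"
      using gens M p by (auto simp: generators_def Obj_eq)
    then have "p = mk a 0"
      using leqG_base_imp_eq \<theta>(2) M p a(2) \<open>basic (\<Gamma> \<union> Gam)\<close> \<open>\<Gamma> \<union> Gam \<subseteq> Obj\<close> by metis
    then show "M \<in> Gam"
      using p a(1) by (auto simp: Gam_eq)
  qed
  moreover have "Gam \<subseteq> \<Gamma>"
  proof
    fix M assume "M \<in> Gam"
    then obtain a where a: "a \<in> K" "M = {#mk a 0#}"
      by (auto simp: Gam_eq)
    obtain q where q: "{#q#} \<in> \<Gamma>" "key q = a"
      using gens \<open>basic \<Gamma>\<close> a(1) by (rule generator_with_key)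
    then have "q = mk a 0"
      using \<open>\<Gamma> \<subseteq> Gam\<close> by (auto simp: Gam_eq)
    then show "M \<in> \<Gamma>"
      using q(1) a(2) by simp
  qed
  ultimately show ?thesis
    by blast
qed

end

lemma scaled_theta_root_iff:
  assumes "a \<in> roots F" "\<bar>c\<bar> = 1" "k < npar F"
  shows "(\<lambda>j. c * theta F k * a j) \<in> roots F \<longleftrightarrow> k = 0"
proof
  assume "(\<lambda>j. c * theta F k * a j) \<in> roots F"
  then have "\<bar>theta F k\<bar> = 1"
    using roots_scaled_imp_abs_1[OF assms(1), of "c * theta F k"] assms(2)
    by (simp add: mult.assoc abs_mult)
  then show "k = 0"
    using theta_gt_1[of k F] assms(3) by (cases "k = 0") (simp_all add: abs_if)
next
  assume "k = 0"
  have "c = 1 \<or> c = -1"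
    using assms(2) by linarith
  then show "(\<lambda>j. c * theta F k * a j) \<in> roots F"
    using \<open>k = 0\<close> assms(1) roots_uminus[OF assms(1)] by (auto simp: fun_Compl_def)
qed

lemma singleton_in_GammaM_iff:
  "{#(a, k)#} \<in> GammaM F \<longleftrightarrow> a \<in> pos_roots F \<and> k = 0 \<and> 0 < npar F"
  using scaled_theta_root_iff[of a F 1 k]
  by (auto simp: GammaM_def ObjM_def indec_def piF_def pos_roots_def)

lemma singleton_in_GammaD_iff:
  "{#(a, k, l)#} \<in> GammaD F \<longleftrightarrow> a \<in> pos_roots F \<and> k = 0 \<and> 0 < npar F"
  using scaled_theta_root_iff[of a F "if even l then 1 else -1" k]
  by (auto simp: GammaD_def ObjD_def indec_def partialF_def pos_roots_def)

lemma GammaM_eq: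
  assumes "0 < npar F"
  shows "GammaM F = {{#(a, 0)#} | a. a \<in> pos_roots F}"
proof -
  have "\<exists>a k. X = {#(a, k)#}" if "X \<in> GammaM F" for X
    using that by (auto simp: GammaM_def indec_iff_singleton)
  then show ?thesis
    using singleton_in_GammaM_iff assms by fastforce
qed

lemma GammaD_eq:
  assumes "0 < npar F"
  shows "GammaD F = {{#(a, 0, l)#} | a l. a \<in> pos_roots F}"
proof -
  have "\<exists>a k l. X = {#(a, k, l)#}" if "X \<in> GammaD F" for X
    using that by (auto simp: GammaD_def indec_iff_singleton)
  then show ?thesis
    using singleton_in_GammaD_iff assms by fastforce
qed

lemma fusion_action_modules:
  assumes "0 < npar F"
  shows "fusion_action (npar F) (theta F) (fusion F) Pair fst snd (pos_roots F)
    (actM F) (ObjM F) (Rplus F) (sigma F) (GammaM F)"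
  by unfold_locales
    (use assms in \<open>auto simp: theta_gt_1 fusion_0 sum_theta_fusion actM_def ObjM_def Rplus_def
      sigma_def[abs_def] GammaM_eq\<close>)

lemma fusion_action_derived:
  assumes "0 < npar F"
  shows "fusion_action (npar F) (theta F) (fusion F) (\<lambda>(a, l) k. (a, k, l))
    (\<lambda>p. (fst p, snd (snd p))) (\<lambda>p. fst (snd p)) (pos_roots F \<times> UNIV)
    (actD F) (ObjD F) (Rplus F) (sigma F) (GammaD F)"
  by unfold_locales
    (use assms in \<open>auto simp: theta_gt_1 fusion_0 sum_theta_fusion actD_def ObjD_def Rplus_def
      sigma_def[abs_def] GammaD_eq\<close>)

theorem theorem6p13:
  assumes "valid_folding F"
  shows "min_gens (actM F) (Rplus F) (sigma F) (ObjM F) (GammaM F)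
       \<and> (\<forall>\<Gamma>'. min_gens (actM F) (Rplus F) (sigma F) (ObjM F) \<Gamma>' \<longrightarrow> \<Gamma>' = GammaM F)
       \<and> min_gens (actD F) (Rplus F) (sigma F) (ObjD F) (GammaD F)
       \<and> (\<forall>\<Gamma>'. min_gens (actD F) (Rplus F) (sigma F) (ObjD F) \<Gamma>' \<longrightarrow> \<Gamma>' = GammaD F)"
proof -
  have "0 < npar F"
    using assms by (cases F) (auto simp: valid_folding_def)
  then interpret M: fusion_action "npar F" "theta F" "fusion F" Pair fst snd "pos_roots F"
      "actM F" "ObjM F" "Rplus F" "sigma F" "GammaM F"
    by (rule fusion_action_modules)
  interpret D: fusion_action "npar F" "theta F" "fusion F" "\<lambda>(a, l) k. (a, k, l)"
      "\<lambda>p. (fst p, snd (snd p))" "\<lambda>p. fst (snd p)" "pos_roots F \<times> UNIV"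
      "actD F" "ObjD F" "Rplus F" "sigma F" "GammaD F"
    using \<open>0 < npar F\<close> by (rule fusion_action_derived)
  show ?thesis
    using M.min_gens_Gam M.min_gens_eq_Gam D.min_gens_Gam D.min_gens_eq_Gam by blast
qed

end
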